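(* Let $n\ge2$ and $\mu\in[0,1-\frac1n]$. Every optimal solution $P=(p_{ij})$ of problem (P) is TP2, i.e. $p_{ij}\,p_{i'j'}\ge p_{ij'}\,p_{i'j}$ for all $1\le i<i'\le n$ and $1\le j<j'\le n$ (equivalently, the associated step density $f(x,y)=n^2p_{ij}$ on $((i-1)/n,i/n)\times((j-1)/n,j/n)$ satisfies $f(x,y)f(x',y')\ge f(x,y')f(x',y)$ whenever $x<x'$, $y<y'$).
   Context: An $n\times n$ checkerboard copula is a real $n\times n$ matrix $P=(p_{ij})$ with nonnegative entries whose row and column sums all equal $\frac1n$. $\Xi=(\xi_{ij})$ with $\xi_{ij}=1$ if $i=j$, $2$ if $i>j$, $0$ if $i<j$. Problem (P): minimize $I(P)=\sum_{i,j}p_{ij}\log p_{ij}$ (with $0\log0=0$) over $n\times n$ checkerboard copulas $P$ with $1-\mathrm{tr}(\Xi P\Xi P^\top)=\mu$. An optimal solution of (P) is called a MICK (minimum information checkerboard copula under fixed Kendall's $\tau$). *)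

theory Defs
  imports Complex_Main
begin

text \<open>n x n real matrices are represented as functions nat => nat => real,
  with indices ranging over {0..<n} (0-based instead of 1-based).\<close>

definition checkerboard_copula :: "nat \<Rightarrow> (nat \<Rightarrow> nat \<Rightarrow> real) \<Rightarrow> bool" where
  "checkerboard_copula n P \<longleftrightarrow>
     (\<forall>i<n. \<forall>j<n. 0 \<le> P i j) \<and>
     (\<forall>i<n. (\<Sum>j<n. P i j) = 1 / real n) \<and>
     (\<forall>j<n. (\<Sum>i<n. P i j) = 1 / real n)"

definition Xi :: "nat \<Rightarrow> nat \<Rightarrow> real" where
  "Xi i j = (if i = j then 1 else if i > j then 2 else 0)"

definition mat_mult :: "nat \<Rightarrow> (nat \<Rightarrow> nat \<Rightarrow> real) \<Rightarrow> (nat \<Rightarrow> nat \<Rightarrow> real) \<Rightarrow> (nat \<Rightarrow> nat \<Rightarrow> real)" where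
  "mat_mult n A B = (\<lambda>i k. \<Sum>j<n. A i j * B j k)"

definition mat_transpose :: "(nat \<Rightarrow> nat \<Rightarrow> real) \<Rightarrow> (nat \<Rightarrow> nat \<Rightarrow> real)" where
  "mat_transpose A = (\<lambda>i j. A j i)"

definition mat_trace :: "nat \<Rightarrow> (nat \<Rightarrow> nat \<Rightarrow> real) \<Rightarrow> real" where
  "mat_trace n A = (\<Sum>i<n. A i i)"

definition kendall_tau :: "nat \<Rightarrow> (nat \<Rightarrow> nat \<Rightarrow> real) \<Rightarrow> real" where
  "kendall_tau n P = 1 - mat_trace n
     (mat_mult n (mat_mult n (mat_mult n Xi P) Xi) (mat_transpose P))"

text \<open>Information I(P) = sum p log p, with 0 log 0 = 0 (ln 0 = 0 in Isabelle, but made explicit).\<close>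
definition info :: "nat \<Rightarrow> (nat \<Rightarrow> nat \<Rightarrow> real) \<Rightarrow> real" where
  "info n P = (\<Sum>i<n. \<Sum>j<n. (if P i j = 0 then 0 else P i j * ln (P i j)))"

definition feasible :: "nat \<Rightarrow> real \<Rightarrow> (nat \<Rightarrow> nat \<Rightarrow> real) \<Rightarrow> bool" where
  "feasible n \<mu> P \<longleftrightarrow> checkerboard_copula n P \<and> kendall_tau n P = \<mu>"

definition MICK :: "nat \<Rightarrow> real \<Rightarrow> (nat \<Rightarrow> nat \<Rightarrow> real) \<Rightarrow> bool" where
  "MICK n \<mu> P \<longleftrightarrow> feasible n \<mu> P \<and> (\<forall>Q. feasible n \<mu> Q \<longrightarrow> info n P \<le> info n Q)"

definition TP2 :: "nat \<Rightarrow> (nat \<Rightarrow> nat \<Rightarrow> real) \<Rightarrow> bool" where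
  "TP2 n P \<longleftrightarrow> (\<forall>i i' j j'. i < i' \<and> i' < n \<and> j < j' \<and> j' < n \<longrightarrow>
      P i j * P i' j' \<ge> P i j' * P i' j)"

end

theory Submission
  imports Defs
begin

(* If P violates TP2 at rows a < a' and columns b < b', move a small mass e from the discordant
   cells (a,b'), (a',b) to the concordant cells (a,b), (a',b').  The margins are unchanged;
   Kendall's tau does not decrease, because Xi is increasing in its first and decreasing in its
   second index; and the information strictly decreases, its first-order change being
   e * ln (p_ab p_a'b' / (p_ab' p_a'b)) < 0.  This contradicts optimality, since for mu >= 0 a
   MICK has no more information than any copula Q with tau Q >= mu: the segment from the
   uniform copula (tau = 0) to Q reaches the level mu, and along it the information is convex
   and minimal at the uniform copula. *)

lemma Xi_add_Xi_swap: "Xi i j + Xi j i = 2"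
  by (auto simp: Xi_def)

lemma Xi_mono_left: "i \<le> i' \<Longrightarrow> Xi i j \<le> Xi i' j"
  by (auto simp: Xi_def)

lemma Xi_antimono_right: "j \<le> j' \<Longrightarrow> Xi i j' \<le> Xi i j"
  by (auto simp: Xi_def)

lemma sum_Xi: "(\<Sum>i<n. \<Sum>j<n. Xi i j) = real n ^ 2"
proof -
  have "(\<Sum>i<n. \<Sum>j<n. Xi j i) = (\<Sum>i<n. \<Sum>j<n. Xi i j)"
    by (rule sum.swap)
  then have "2 * (\<Sum>i<n. \<Sum>j<n. Xi i j) = (\<Sum>i<n. \<Sum>j<n. Xi i j + Xi j i)"
    by (simp add: sum.distrib)
  also have "\<dots> = 2 * real n ^ 2"
    by (simp add: Xi_add_Xi_swap power2_eq_square)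
  finally show ?thesis by simp
qed

(* xi_form n X Y = tr (Xi X Xi Y^T), written as the entrywise product of Xi X Xi with Y. *)
definition xi_form :: "nat \<Rightarrow> (nat \<Rightarrow> nat \<Rightarrow> real) \<Rightarrow> (nat \<Rightarrow> nat \<Rightarrow> real) \<Rightarrow> real" where
  "xi_form n X Y = (\<Sum>i<n. \<Sum>j<n. mat_mult n (mat_mult n Xi X) Xi i j * Y i j)"

lemma mat_trace_mult_transpose:
  "mat_trace n (mat_mult n A (mat_transpose B)) = (\<Sum>i<n. \<Sum>j<n. A i j * B i j)"
  by (simp add: mat_trace_def mat_mult_def mat_transpose_def)

lemma kendall_tau_eq_xi_form: "kendall_tau n P = 1 - xi_form n P P"
  by (simp add: kendall_tau_def xi_form_def mat_trace_mult_transpose)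

lemma xi_form_add_smult:
  "xi_form n (\<lambda>i j. X i j + e * D i j) (\<lambda>i j. X i j + e * D i j)
     = xi_form n X X + e * (xi_form n X D + xi_form n D X) + e\<^sup>2 * xi_form n D D"
  by (simp add: xi_form_def mat_mult_def sum.distrib sum_distrib_left sum_distrib_right
      algebra_simps power2_eq_square)

lemma mat_mult_outer:
  "mat_mult n (mat_mult n A (\<lambda>j k. u j * v k)) B i l = (\<Sum>j<n. A i j * u j) * (\<Sum>k<n. v k * B k l)"
  by (simp add: mat_mult_def sum_distrib_left sum_distrib_right mult_ac)

definition uniform_copula :: "nat \<Rightarrow> nat \<Rightarrow> nat \<Rightarrow> real" where
  "uniform_copula n i j = 1 / real n ^ 2"

lemma checkerboard_copula_uniform: "n > 0 \<Longrightarrow> checkerboard_copula n (uniform_copula n)"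
  by (simp add: checkerboard_copula_def uniform_copula_def power2_eq_square)

lemma kendall_tau_uniform:
  assumes "n > 0" shows "kendall_tau n (uniform_copula n) = 0"
proof -
  define c where "c = 1 / real n"
  have "uniform_copula n = (\<lambda>j k. c * c)"
    by (simp add: fun_eq_iff uniform_copula_def c_def power2_eq_square)
  then have "xi_form n (uniform_copula n) (uniform_copula n)
      = (\<Sum>i<n. \<Sum>l<n. c ^ 4 * ((\<Sum>j<n. Xi i j) * (\<Sum>k<n. Xi k l)))"
    by (simp add: xi_form_def mat_mult_outer flip: sum_distrib_left sum_distrib_right)
      (simp add: power4_eq_xxxx mult_ac)
  also have "\<dots> = c ^ 4 * ((\<Sum>i<n. \<Sum>j<n. Xi i j) * (\<Sum>l<n. \<Sum>k<n. Xi k l))"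
    by (subst sum_product) (simp only: sum_distrib_left)
  also have "\<dots> = c ^ 4 * (real n ^ 2 * real n ^ 2)"
    by (simp add: sum_Xi sum.swap[of "\<lambda>l k. Xi k l"])
  also have "\<dots> = 1"
    using assms by (simp add: c_def power_divide flip: power_add)
  finally show ?thesis by (simp add: kendall_tau_eq_xi_form)
qed

definition delta_diff :: "nat \<Rightarrow> nat \<Rightarrow> nat \<Rightarrow> real" where
  "delta_diff a a' i = (if i = a then 1 else 0) - (if i = a' then 1 else 0)"

definition concordant_shift :: "nat \<Rightarrow> nat \<Rightarrow> nat \<Rightarrow> nat \<Rightarrow> nat \<Rightarrow> nat \<Rightarrow> real" where
  "concordant_shift a a' b b' i j = delta_diff a a' i * delta_diff b b' j"

lemma sum_delta_diff:
  assumes "a < n" "a' < n"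
  shows "(\<Sum>i<n. delta_diff a a' i * f i) = f a - f a'"
    and "(\<Sum>i<n. f i * delta_diff a a' i) = f a - f a'"
proof -
  have "delta_diff a a' i * f i = (if i = a then f a else 0) - (if i = a' then f a' else 0)" for i
    by (simp add: delta_diff_def)
  then show "(\<Sum>i<n. delta_diff a a' i * f i) = f a - f a'"
    using assms by (simp add: sum_subtractf)
  then show "(\<Sum>i<n. f i * delta_diff a a' i) = f a - f a'"
    by (simp add: mult.commute)
qed

lemma sum_concordant_shift:
  assumes "a < n" "a' < n" "b < n" "b' < n"
  shows "(\<Sum>i<n. \<Sum>j<n. f i j * concordant_shift a a' b b' i j) = f a b - f a b' - f a' b + f a' b'"
proof -
  have "(\<Sum>j<n. f i j * concordant_shift a a' b b' i j) = delta_diff a a' i * (f i b - f i b')" for i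
  proof -
    have "(\<Sum>j<n. f i j * concordant_shift a a' b b' i j)
        = delta_diff a a' i * (\<Sum>j<n. f i j * delta_diff b b' j)"
      by (simp add: concordant_shift_def sum_distrib_left mult_ac)
    then show ?thesis
      using assms by (simp add: sum_delta_diff)
  qed
  then show ?thesis
    using assms by (simp add: sum_delta_diff)
qed

lemma xi_form_right_concordant_shift:
  assumes "a < n" "a' < n" "b < n" "b' < n"
  shows "xi_form n X (concordant_shift a a' b b')
    = (\<Sum>k<n. \<Sum>j<n. X j k * (Xi a j - Xi a' j) * (Xi k b - Xi k b'))"
  unfolding xi_form_def sum_concordant_shift[OF assms]
  by (simp add: mat_mult_def sum_distrib_left sum_distrib_right algebra_simps sum_subtractf sum.distrib)

lemma mat_mult_Xi_concordant_shift:
  assumes "a < n" "a' < n" "b < n" "b' < n"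
  shows "mat_mult n (mat_mult n Xi (concordant_shift a a' b b')) Xi i l
    = (Xi i a - Xi i a') * (Xi b l - Xi b' l)"
  using assms by (simp add: concordant_shift_def[abs_def] mat_mult_outer sum_delta_diff)

lemma kendall_tau_le_concordant_shift:
  assumes "\<And>i j. i < n \<Longrightarrow> j < n \<Longrightarrow> 0 \<le> P i j"
    and "a < a'" "a' < n" "b < b'" "b' < n" "0 \<le> e"
  shows "kendall_tau n P \<le> kendall_tau n (\<lambda>i j. P i j + e * concordant_shift a a' b b' i j)"
proof -
  let ?D = "concordant_shift a a' b b'"
  have idx: "a < n" "a' < n" "b < n" "b' < n"
    using assms by auto
  have "xi_form n P ?D \<le> 0"
    unfolding xi_form_right_concordant_shift[OF idx]
    using assms by (intro sum_nonpos mult_nonpos_nonneg mult_nonneg_nonpos)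
      (auto intro: Xi_mono_left Xi_antimono_right)
  moreover have "xi_form n ?D P \<le> 0"
    unfolding xi_form_def mat_mult_Xi_concordant_shift[OF idx]
    using assms by (intro sum_nonpos mult_nonpos_nonneg mult_nonneg_nonpos)
      (auto intro: Xi_mono_left Xi_antimono_right)
  moreover have "xi_form n ?D ?D = 0"
    unfolding xi_form_def mat_mult_Xi_concordant_shift[OF idx] sum_concordant_shift[OF idx]
    using assms by (simp add: Xi_def)
  ultimately show ?thesis
    using \<open>0 \<le> e\<close> by (simp add: kendall_tau_eq_xi_form xi_form_add_smult mult_nonneg_nonpos)
qed

lemma xlnx_tangent_le:
  fixes x y :: real
  assumes "0 < y" "0 \<le> x"
  shows "y * ln y - x * ln x \<le> (y - x) * (ln y + 1)"
proof (cases "x = 0")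
  case False
  with assms have "x * ln (y / x) \<le> x * (y / x - 1)"
    by (intro mult_left_mono ln_le_minus_one) auto
  with assms False show ?thesis
    by (simp add: ln_div algebra_simps)
qed (use assms in simp)

lemma xlnx_convex:
  fixes x y t :: real
  assumes "0 \<le> x" "0 \<le> y" "0 \<le> t" "t \<le> 1"
  shows "((1 - t) * x + t * y) * ln ((1 - t) * x + t * y) \<le> (1 - t) * (x * ln x) + t * (y * ln y)"
proof -
  define m where "m = (1 - t) * x + t * y"
  have "(1 - t) * x \<ge> 0" "t * y \<ge> 0"
    using assms by simp_all
  show ?thesis
  proof (cases "m = 0")
    case True
    then have "(1 - t) * x = 0" "t * y = 0"
      using \<open>(1 - t) * x \<ge> 0\<close> \<open>t * y \<ge> 0\<close> unfolding m_def by linarith+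
    then have "(1 - t) * (x * ln x) = 0" "t * (y * ln y) = 0"
      by (simp_all add: mult.assoc[symmetric])
    then show ?thesis
      using True by (simp only: m_def mult_zero_left add_0)
  next
    case False
    then have "m > 0"
      using \<open>(1 - t) * x \<ge> 0\<close> \<open>t * y \<ge> 0\<close> by (simp add: m_def)
    have "(1 - t) * (m * ln m - x * ln x) + t * (m * ln m - y * ln y)
        \<le> (1 - t) * ((m - x) * (ln m + 1)) + t * ((m - y) * (ln m + 1))"
      using assms \<open>m > 0\<close> by (intro add_mono mult_left_mono xlnx_tangent_le) auto
    also have "\<dots> = 0"
      by (simp add: m_def algebra_simps)
    finally show ?thesis
      by (simp add: m_def algebra_simps)
  qed
qed

lemma info_eq_sum: "info n P = (\<Sum>i<n. \<Sum>j<n. P i j * ln (P i j))"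
  unfolding info_def by (intro sum.cong refl) simp

lemma info_diff_le:
  assumes "\<And>i j. i < n \<Longrightarrow> j < n \<Longrightarrow> 0 \<le> P i j"
    and "\<And>i j. i < n \<Longrightarrow> j < n \<Longrightarrow> 0 < Q i j \<or> Q i j = P i j"
  shows "info n Q - info n P \<le> (\<Sum>i<n. \<Sum>j<n. (Q i j - P i j) * (ln (Q i j) + 1))"
  unfolding info_eq_sum sum_subtractf[symmetric]
  using assms by (intro sum_mono) (metis lessThan_iff xlnx_tangent_le order.refl diff_self mult_zero_left)

lemma info_convex:
  assumes "\<And>i j. i < n \<Longrightarrow> j < n \<Longrightarrow> 0 \<le> P i j"
    and "\<And>i j. i < n \<Longrightarrow> j < n \<Longrightarrow> 0 \<le> Q i j"
    and "0 \<le> t" "t \<le> 1"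
  shows "info n (\<lambda>i j. (1 - t) * P i j + t * Q i j) \<le> (1 - t) * info n P + t * info n Q"
proof -
  have "info n (\<lambda>i j. (1 - t) * P i j + t * Q i j)
      \<le> (\<Sum>i<n. \<Sum>j<n. (1 - t) * (P i j * ln (P i j)) + t * (Q i j * ln (Q i j)))"
    unfolding info_eq_sum using assms by (intro sum_mono xlnx_convex) auto
  also have "\<dots> = (1 - t) * info n P + t * info n Q"
    by (simp add: info_eq_sum sum.distrib sum_distrib_left)
  finally show ?thesis .
qed

lemma info_uniform_le:
  assumes "n > 0" "checkerboard_copula n Q"
  shows "info n (uniform_copula n) \<le> info n Q"
proof -
  define c where "c = 1 / real n ^ 2"
  have "(\<Sum>i<n. \<Sum>j<n. Q i j) = 1"
    using assms by (simp add: checkerboard_copula_def)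
  moreover have "info n (uniform_copula n) - info n Q
      \<le> (\<Sum>i<n. \<Sum>j<n. (c - Q i j) * (ln c + 1))"
    using info_diff_le[of n Q "uniform_copula n"] assms
    by (simp add: checkerboard_copula_def uniform_copula_def c_def)
  ultimately show ?thesis
    using assms by (simp add: sum_subtractf c_def power2_eq_square flip: sum_distrib_right)
qed

lemma checkerboard_copula_convex:
  assumes "checkerboard_copula n P" "checkerboard_copula n Q" "0 \<le> t" "t \<le> 1"
  shows "checkerboard_copula n (\<lambda>i j. (1 - t) * P i j + t * Q i j)"
  using assms by (simp add: checkerboard_copula_def sum.distrib flip: sum_distrib_left)
    (simp flip: add_divide_distrib)

lemma MICK_info_le:
  assumes "MICK n \<mu> P" "0 \<le> \<mu>" "checkerboard_copula n Q" "\<mu> \<le> kendall_tau n Q"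
  shows "info n P \<le> info n Q"
proof (cases "n = 0")
  case False
  define R where "R t = (\<lambda>i j. (1 - t) * uniform_copula n i j + t * Q i j)" for t
  have "\<forall>t. 0 \<le> t \<and> t \<le> 1 \<longrightarrow> isCont (\<lambda>t. kendall_tau n (R t)) t"
    unfolding R_def kendall_tau_def mat_trace_def mat_mult_def mat_transpose_def
    by (intro allI impI continuous_intros)
  moreover have "kendall_tau n (R 0) \<le> \<mu>" "\<mu> \<le> kendall_tau n (R 1)"
    using assms False by (simp_all add: R_def kendall_tau_uniform)
  ultimately obtain t where t: "0 \<le> t" "t \<le> 1" "kendall_tau n (R t) = \<mu>"
    using IVT[of "\<lambda>t. kendall_tau n (R t)" 0 \<mu> 1] by auto
  have "checkerboard_copula n (R t)"
    unfolding R_def using False assms t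
    by (intro checkerboard_copula_convex checkerboard_copula_uniform) auto
  then have "info n P \<le> info n (R t)"
    using assms t by (simp add: MICK_def feasible_def)
  also have "\<dots> \<le> (1 - t) * info n (uniform_copula n) + t * info n Q"
    unfolding R_def using assms t
    by (intro info_convex) (auto simp: uniform_copula_def checkerboard_copula_def)
  also have "\<dots> \<le> (1 - t) * info n Q + t * info n Q"
    using info_uniform_le[of n Q] False assms t by (intro add_right_mono mult_left_mono) auto
  finally show ?thesis
    by (simp add: algebra_simps)
qed (simp add: info_def)

lemma concordant_shift_pos_or_eq:
  assumes "\<And>i j. i < n \<Longrightarrow> j < n \<Longrightarrow> 0 \<le> P i j"
    and "a \<noteq> a'" "b \<noteq> b'" "0 < e" "e < P a b'" "e < P a' b" "i < n" "j < n"
  shows "0 < P i j + e * concordant_shift a a' b b' i j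
    \<or> P i j + e * concordant_shift a a' b b' i j = P i j"
  using assms(1)[of i j] assms(2-) by (auto simp: concordant_shift_def delta_diff_def)

lemma checkerboard_copula_concordant_shift:
  assumes copula: "checkerboard_copula n P"
    and idx: "a < n" "a' < n" "b < n" "b' < n" "a \<noteq> a'" "b \<noteq> b'"
    and e: "0 < e" "e < P a b'" "e < P a' b"
  shows "checkerboard_copula n (\<lambda>i j. P i j + e * concordant_shift a a' b b' i j)"
proof -
  have nonneg: "\<And>i j. i < n \<Longrightarrow> j < n \<Longrightarrow> 0 \<le> P i j"
    using copula by (simp add: checkerboard_copula_def)
  then have "0 \<le> P i j + e * concordant_shift a a' b b' i j" if "i < n" "j < n" for i j
    using concordant_shift_pos_or_eq[OF nonneg idx(5,6) e that] nonneg[OF that] by auto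
  moreover have "(\<Sum>j<n. delta_diff b b' j) = 0" "(\<Sum>i<n. delta_diff a a' i) = 0"
    using sum_delta_diff(1)[of b n b' "\<lambda>_. 1"] sum_delta_diff(1)[of a n a' "\<lambda>_. 1"] idx
    by simp_all
  ultimately show ?thesis
    using copula by (simp add: checkerboard_copula_def concordant_shift_def sum.distrib
        mult.assoc flip: sum_distrib_left sum_distrib_right)
qed

lemma info_concordant_shift_less:
  assumes nonneg: "\<And>i j. i < n \<Longrightarrow> j < n \<Longrightarrow> 0 \<le> P i j"
    and idx: "a < n" "a' < n" "b < n" "b' < n" "a \<noteq> a'" "b \<noteq> b'"
    and e: "0 < e" "e < P a b'" "e < P a' b"
    and less: "(P a b + e) * (P a' b' + e) < (P a b' - e) * (P a' b - e)"
  shows "info n (\<lambda>i j. P i j + e * concordant_shift a a' b b' i j) < info n P"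
proof -
  define Q where "Q = (\<lambda>i j. P i j + e * concordant_shift a a' b b' i j)"
  have Q: "Q a b = P a b + e" "Q a' b' = P a' b' + e" "Q a b' = P a b' - e" "Q a' b = P a' b - e"
    using idx by (simp_all add: Q_def concordant_shift_def delta_diff_def)
  have pos: "0 < Q a b" "0 < Q a' b'" "0 < Q a b'" "0 < Q a' b"
    using nonneg[of a b] nonneg[of a' b'] idx e by (simp_all add: Q)
  have "ln (Q a b * Q a' b') < ln (Q a b' * Q a' b)"
    using less pos by (simp add: Q)
  then have ln_less: "ln (Q a b) + ln (Q a' b') < ln (Q a b') + ln (Q a' b)"
    using pos by (simp add: ln_mult)
  have "info n Q - info n P
      \<le> (\<Sum>i<n. \<Sum>j<n. e * (ln (Q i j) + 1) * concordant_shift a a' b b' i j)"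
    using info_diff_le[of n P Q] nonneg concordant_shift_pos_or_eq[OF nonneg idx(5,6) e]
    by (simp add: Q_def mult_ac)
  also have "\<dots> = e * ((ln (Q a b) + ln (Q a' b')) - (ln (Q a b') + ln (Q a' b)))"
    by (subst sum_concordant_shift[OF idx(1-4)]) (simp add: algebra_simps)
  also have "\<dots> < 0"
    using ln_less e by (simp add: mult_pos_neg)
  finally show ?thesis
    unfolding Q_def by simp
qed

lemma exists_small_shift:
  fixes p q r s :: real
  assumes "0 \<le> p" "0 \<le> q" "0 \<le> r" "0 \<le> s" "p * q < r * s"
  shows "\<exists>e>0. e < r \<and> e < s \<and> (p + e) * (q + e) < (r - e) * (s - e)"
proof -
  have "0 < r * s"
    using assms mult_nonneg_nonneg[of p q] by linarith
  then have "0 < r" "0 < s"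
    using assms by (auto simp: zero_less_mult_iff)
  have "((\<lambda>e. (r - e) * (s - e) - (p + e) * (q + e)) \<longlongrightarrow> r * s - p * q) (at_right 0)"
    by (auto intro!: tendsto_eq_intros)
  then have "\<forall>\<^sub>F e in at_right 0. 0 < (r - e) * (s - e) - (p + e) * (q + e)"
    by (rule order_tendstoD(1)) (use assms in simp)
  moreover have "\<forall>\<^sub>F e in at_right 0. e < r" "\<forall>\<^sub>F e in at_right 0. e < s"
    using order_tendstoD(2)[OF tendsto_ident_at] \<open>0 < r\<close> \<open>0 < s\<close> by blast+
  moreover have "\<forall>\<^sub>F e in at_right (0::real). 0 < e"
    by (rule eventually_at_right_less)
  ultimately have "\<forall>\<^sub>F e in at_right (0::real). 0 < e \<and> e < r \<and> e < s
      \<and> (p + e) * (q + e) < (r - e) * (s - e)"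
    by eventually_elim auto
  then show ?thesis
    by (blast dest: eventually_happens'[OF trivial_limit_at_right_real])
qed

lemma not_TP2_improvable:
  assumes copula: "checkerboard_copula n P" and "\<not> TP2 n P"
  shows "\<exists>Q. checkerboard_copula n Q \<and> kendall_tau n P \<le> kendall_tau n Q \<and> info n Q < info n P"
proof -
  obtain a a' b b' where idx: "a < a'" "a' < n" "b < b'" "b' < n"
    and violation: "P a b * P a' b' < P a b' * P a' b"
    using assms(2) unfolding TP2_def by (auto simp: not_le)
  have nonneg: "\<And>i j. i < n \<Longrightarrow> j < n \<Longrightarrow> 0 \<le> P i j"
    using copula by (simp add: checkerboard_copula_def)
  then have "0 \<le> P a b" "0 \<le> P a' b'" "0 \<le> P a b'" "0 \<le> P a' b"
    using idx by auto
  then obtain e where e: "0 < e" "e < P a b'" "e < P a' b"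
    and less: "(P a b + e) * (P a' b' + e) < (P a b' - e) * (P a' b - e)"
    using exists_small_shift violation by blast
  let ?Q = "\<lambda>i j. P i j + e * concordant_shift a a' b b' i j"
  show ?thesis
  proof (intro exI conjI)
    show "checkerboard_copula n ?Q"
      using copula idx e by (intro checkerboard_copula_concordant_shift) auto
    show "kendall_tau n P \<le> kendall_tau n ?Q"
      using nonneg idx e by (intro kendall_tau_le_concordant_shift) auto
    show "info n ?Q < info n P"
      using nonneg idx e less by (intro info_concordant_shift_less) auto
  qed
qed

theorem proposition3:
  fixes n :: nat and \<mu> :: real and P :: "nat \<Rightarrow> nat \<Rightarrow> real"
  assumes "n \<ge> 2"
    and "0 \<le> \<mu>" and "\<mu> \<le> 1 - 1 / real n"
    and "MICK n \<mu> P"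
  shows "TP2 n P"
proof (rule ccontr)
  assume "\<not> TP2 n P"
  moreover have "checkerboard_copula n P" and tau: "kendall_tau n P = \<mu>"
    using assms(4) by (simp_all add: MICK_def feasible_def)
  ultimately obtain Q where Q: "checkerboard_copula n Q" "\<mu> \<le> kendall_tau n Q" "info n Q < info n P"
    using not_TP2_improvable tau by blast
  then have "info n P \<le> info n Q"
    by (intro MICK_info_le[OF assms(4,2)])
  with Q show False
    by simp
qed

end
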